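(* Let $\alpha\ge3$, $t_0>0$, $x_0\in\mathcal H$, and let $x:[t_0,+\infty)\to\mathcal H$ be a solution of the Cauchy problem $$\tfrac{\alpha}{t}\dot x(t)+\operatorname{proj}_{C(x(t))+\ddot x(t)}(0)=0\ (t>t_0),\qquad x(t_0)=x_0,\ \dot x(t_0)=0 .$$ Assume the Assumption on the weak Pareto set in the context holds, and let $R$ be the constant defined there with respect to $x_0$. Then for all $t\in[t_0,+\infty)$ $$t^2u_0(x(t))\le t_0^2u_0(x_0)+2(\alpha-1)R+(3-\alpha)\int_{t_0}^t s\|\dot x(s)\|^2\,ds,$$ and hence $u_0(x(t))\le \dfrac{t_0^2u_0(x_0)+2(\alpha-1)R}{t^2}$ for all $t\in[t_0,+\infty)$.
   Context: $\mathcal H$ is a real Hilbert space. $f_1,\dots,f_m:\mathcal H\to\mathbb R$ are convex and continuously differentiable, and $F=(f_1,\dots,f_m)$. $C(x)=\operatorname{co}\{\nabla f_i(x):i=1,\dots,m\}$. For a closed convex $K\subset\mathcal H$, $\operatorname{proj}_K(y)=\arg\min_{w\in K}\|w-y\|^2$. A solution of the Cauchy problem is a function $x:[t_0,+\infty)\to\mathcal H$ such that: $x\in C^1([t_0,+\infty))$; $\dot x$ is absolutely continuous on $[t_0,T]$ for every $T\ge t_0$; there is a Bochner measurable $\ddot x$ with $\dot x(t)=\dot x(t_0)+\int_{t_0}^t\ddot x(s)\,ds$ for all $t$, and $\frac{d}{dt}\dot x=\ddot x$ a.e.; the equation holds for almost all $t\ge t_0$; and the initial conditions hold. A point $x^*$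 is weakly Pareto optimal if there is no $x$ with $f_i(x)<f_i(x^* )$ for all $i$; $P_w$ denotes the set of such points. The merit function is $u_0(x)=\sup_{z\in\mathcal H}\min_i\big(f_i(x)-f_i(z)\big)$. For $\hat F\in\mathbb R^m$, $\mathcal L(\hat F)=\{x:F(x)\le\hat F\}$ and $P_w(\hat F)=P_w\cap\mathcal L(\hat F)$. Assumption: for all $x_0\in\mathcal H$ and all $x\in\mathcal L(F(x_0))$ there exists $x^*\in P_w(F(x))$, and $$R:=\sup_{F^*\in F(P_w(F(x_0)))}\ \inf_{x\in F^{-1}(F^* )}\tfrac12\|x-x_0\|^2<+\infty .$$ *)

theory Defs
  imports "HOL-Analysis.Analysis"
begin

definition proj :: "'a::real_normed_vector set \<Rightarrow> 'a \<Rightarrow> 'a" where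
  "proj K y = (SOME w. w \<in> K \<and> (\<forall>v\<in>K. (norm (w - y))\<^sup>2 \<le> (norm (v - y))\<^sup>2))"

definition Cset :: "('m \<Rightarrow> 'a \<Rightarrow> 'a::real_vector) \<Rightarrow> 'a \<Rightarrow> 'a set" where
  "Cset g x = convex hull (range (\<lambda>i. g i x))"

text \<open>F(x) as a vector in R^m (functions 'm => real; order is componentwise).\<close>
definition Fv :: "('m \<Rightarrow> 'a \<Rightarrow> real) \<Rightarrow> 'a \<Rightarrow> 'm \<Rightarrow> real" where
  "Fv f x = (\<lambda>i. f i x)"

definition weak_pareto :: "('m \<Rightarrow> 'a \<Rightarrow> real) \<Rightarrow> 'a set" where
  "weak_pareto f = {xs. \<not> (\<exists>x. \<forall>i. f i x < f i xs)}"

definition level :: "('m \<Rightarrow> 'a \<Rightarrow> real) \<Rightarrow> ('m \<Rightarrow> real) \<Rightarrow> 'a set" where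
  "level f Fh = {x. \<forall>i. f i x \<le> Fh i}"

definition weak_pareto_level :: "('m \<Rightarrow> 'a \<Rightarrow> real) \<Rightarrow> ('m \<Rightarrow> real) \<Rightarrow> 'a set" where
  "weak_pareto_level f Fh = weak_pareto f \<inter> level f Fh"

text \<open>Merit function u_0, valued in the extended reals (the supremum may be infinite).\<close>
definition u0 :: "('m::finite \<Rightarrow> 'a \<Rightarrow> real) \<Rightarrow> 'a \<Rightarrow> ereal" where
  "u0 f x = (SUP z. ereal (Min (range (\<lambda>i. f i x - f i z))))"

definition Rconst :: "('m \<Rightarrow> 'a \<Rightarrow> real) \<Rightarrow> 'a::real_normed_vector \<Rightarrow> ereal" where
  "Rconst f x0 = (SUP Fs \<in> Fv f ` weak_pareto_level f (Fv f x0).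
      ereal (INF x \<in> Fv f -` {Fs}. (norm (x - x0))\<^sup>2 / 2))"

definition abs_cont_on :: "real \<Rightarrow> real \<Rightarrow> (real \<Rightarrow> 'a::real_normed_vector) \<Rightarrow> bool" where
  "abs_cont_on a b h \<longleftrightarrow>
     (\<forall>\<epsilon>>0. \<exists>\<delta>>0. \<forall>D::(real \<times> real) set.
        finite D \<and> (\<forall>(u,v)\<in>D. a \<le> u \<and> u \<le> v \<and> v \<le> b) \<and>
        pairwise (\<lambda>(u,v) (u',v'). {u<..<v} \<inter> {u'<..<v'} = {}) D \<and>
        (\<Sum>(u,v)\<in>D. v - u) < \<delta>
        \<longrightarrow> (\<Sum>(u,v)\<in>D. norm (h v - h u)) < \<epsilon>)"

definition bochner_measurable_on :: "(real \<Rightarrow> 'a::real_normed_vector) \<Rightarrow> real set \<Rightarrow> bool" where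
  "bochner_measurable_on h S \<longleftrightarrow>
     (\<exists>\<phi> N. negligible N \<and>
        (\<forall>n. finite (range (\<phi> n)) \<and> (\<forall>v. (\<phi> n) -` {v} \<in> sets lebesgue)) \<and>
        (\<forall>s\<in>S - N. (\<lambda>n. \<phi> n s) \<longlonglongrightarrow> h s))"

end

theory Submission
  imports Defs
begin

text \<open>Fix z and let h(s) = min_i (f_i(x s) - f_i(z)). The function
  E(t) = t^2 h(t) + |2(x t - z) + t x'(t)|^2/2 + (\<alpha> - 3)|x t - z|^2 - (3 - \<alpha>) int_t0^t s|x'(s)|^2 ds
  is nonincreasing. Near a time where the minimum is attained by f_j, E is majorised by the same
  expression with f_j, whose derivative is t^2 x' \<bullet> (grad f_j(x) - c) + 2t (f_j(x) - f_j(z) - (x - z) \<bullet> c),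
  where the equation reads x'' = -(\<alpha>/t) x' - c with c \<in> C(x): the first term is \<le> 0 by the
  variational inequality of the projection, the second by convexity. Since x' is merely
  Lipschitz, this holds only almost everywhere, and monotonicity follows from a Dini-type
  argument that discards a null set. Comparing E(t) with E(t0) bounds t^2 h(t) for every z.
  The same argument for f_i(x) + |x'|^2/2 keeps x(t) in the level set of x0, so by the Pareto
  assumption z may be replaced by a point w dominating it with |w - x0|^2/2 close to at most R.\<close>

section \<open>Convexity and projections\<close>

lemma convex_on_gradient_inequality:
  fixes f :: "'a::real_inner \<Rightarrow> real"
  assumes cf: "convex_on UNIV f" and df: "(f has_derivative (\<lambda>h. g \<bullet> h)) (at y)"
  shows "f y + g \<bullet> (z - y) \<le> f z"
proof -
  define q where "q s = f (y + s *\<^sub>R (z - y))" for s::real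
  have convex: "convex_on UNIV q"
  proof (rule convex_onI)
    fix t a b :: real assume "t > 0" "t < 1"
    have "y + ((1 - t) * a + t * b) *\<^sub>R (z - y) = (1 - t) *\<^sub>R (y + a *\<^sub>R (z - y)) + t *\<^sub>R (y + b *\<^sub>R (z - y))"
      by (simp add: algebra_simps)
    then show "q ((1 - t) *\<^sub>R a + t *\<^sub>R b) \<le> (1 - t) * q a + t * q b"
      unfolding q_def using convex_onD[OF cf, of t] \<open>t > 0\<close> \<open>t < 1\<close> by simp
  qed simp
  have "(q has_field_derivative (g \<bullet> (z - y))) (at 0)"
  proof -
    have "((\<lambda>s. y + s *\<^sub>R (z - y)) has_derivative (\<lambda>s. s *\<^sub>R (z - y))) (at 0)"
      by (auto intro!: derivative_eq_intros)
    moreover have "(f has_derivative (\<lambda>h. g \<bullet> h)) (at (y + 0 *\<^sub>R (z - y)))"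
      using df by simp
    ultimately have "(q has_derivative (\<lambda>s. g \<bullet> (s *\<^sub>R (z - y)))) (at 0)"
      unfolding q_def using has_derivative_compose by (fastforce simp: o_def)
    then show ?thesis
      by (simp add: has_field_derivative_def mult.commute[of _ "g \<bullet> (z - y)"])
  qed
  from convex_on_imp_above_tangent[OF convex _ _ _ this, of 1] show ?thesis
    by (simp add: q_def)
qed

lemma proj_variational_inequality:
  fixes K :: "'a::real_inner set"
  assumes "compact K" "convex K" "K \<noteq> {}"
  shows "proj K 0 \<in> K" and "\<And>w. w \<in> K \<Longrightarrow> proj K 0 \<bullet> (w - proj K 0) \<ge> 0"
proof -
  obtain p where "p \<in> K" "\<And>v. v \<in> K \<Longrightarrow> norm p \<le> norm v"
    using compact_attains_inf[of "norm ` K"] assms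
    by (metis (no_types, lifting) compact_continuous_image continuous_on_norm_id empty_is_image imageE imageI)
  then have "\<exists>w. w \<in> K \<and> (\<forall>v\<in>K. (norm (w - 0))\<^sup>2 \<le> (norm (v - 0))\<^sup>2)"
    by (auto intro!: exI[of _ p] power_mono)
  from someI_ex[OF this]
  have proj_min: "proj K 0 \<in> K" "\<And>v. v \<in> K \<Longrightarrow> (norm (proj K 0))\<^sup>2 \<le> (norm v)\<^sup>2"
    unfolding proj_def by auto
  define q where "q = proj K 0"
  show "proj K 0 \<in> K" by (fact proj_min(1))
  fix w assume w: "w \<in> K"
  show "proj K 0 \<bullet> (w - proj K 0) \<ge> 0"
  proof (rule ccontr)
    define d where "d = w - q"
    assume "\<not> proj K 0 \<bullet> (w - proj K 0) \<ge> 0"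
    then have qd: "q \<bullet> d < 0" by (simp add: q_def d_def)
    then have nd: "(norm d)\<^sup>2 > 0" by auto
    \<comment> \<open>a small step from q towards w would decrease the norm\<close>
    define s where "s = min 1 (- (q \<bullet> d) / (norm d)\<^sup>2)"
    have s: "0 < s" "s \<le> 1" using qd nd by (auto simp: s_def field_simps)
    have "s * (norm d)\<^sup>2 \<le> (- (q \<bullet> d) / (norm d)\<^sup>2) * (norm d)\<^sup>2"
      using nd by (intro mult_right_mono) (auto simp: s_def)
    with nd have s_small: "s * (norm d)\<^sup>2 \<le> - (q \<bullet> d)" by simp
    have "q + s *\<^sub>R d = (1 - s) *\<^sub>R q + s *\<^sub>R w" by (simp add: d_def algebra_simps)
    also have "\<dots> \<in> K" using assms(2) proj_min(1) w s by (simp add: convex_def q_def)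
    finally have "(norm q)\<^sup>2 \<le> (norm (q + s *\<^sub>R d))\<^sup>2" using proj_min(2) by (simp add: q_def)
    also have "\<dots> = (norm q)\<^sup>2 + s * (2 * (q \<bullet> d) + s * (norm d)\<^sup>2)"
      unfolding power2_norm_eq_inner by (simp add: inner_add_left inner_add_right algebra_simps inner_commute)
    finally have "0 \<le> 2 * (q \<bullet> d) + s * (norm d)\<^sup>2"
      using s by (simp add: zero_le_mult_iff)
    then show False using s_small qd by linarith
  qed
qed

section \<open>Pointwise Lipschitz functions\<close>

definition pointwise_lipschitz :: "(real \<Rightarrow> 'b::real_normed_vector) \<Rightarrow> real set \<Rightarrow> real \<Rightarrow> bool" where
  "pointwise_lipschitz u S t \<longleftrightarrow> (\<exists>B. \<forall>\<^sub>F s in at t within S. norm (u s - u t) \<le> B * \<bar>s - t\<bar>)"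

lemma pointwise_lipschitzE:
  assumes "pointwise_lipschitz u S t"
  obtains B where "B \<ge> 0" "\<forall>\<^sub>F s in at t within S. norm (u s - u t) \<le> B * \<bar>s - t\<bar>"
proof -
  obtain B where "\<forall>\<^sub>F s in at t within S. norm (u s - u t) \<le> B * \<bar>s - t\<bar>"
    using assms unfolding pointwise_lipschitz_def by blast
  then have "\<forall>\<^sub>F s in at t within S. norm (u s - u t) \<le> max B 0 * \<bar>s - t\<bar>"
    by eventually_elim (meson abs_ge_zero max.cobounded1 mult_right_mono order_trans)
  then show thesis using that[of "max B 0"] by simp
qed

lemma pointwise_lipschitz_ball:
  assumes "pointwise_lipschitz u S t"
  obtains B \<delta> where "\<delta> > 0" "\<And>s. s \<in> S \<Longrightarrow> \<bar>s - t\<bar> < \<delta> \<Longrightarrow> norm (u s - u t) \<le> B * \<bar>s - t\<bar>"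
proof -
  obtain B where "\<forall>\<^sub>F s in at t within S. norm (u s - u t) \<le> B * \<bar>s - t\<bar>"
    using assms unfolding pointwise_lipschitz_def by blast
  then obtain \<delta> where "\<delta> > 0"
    "\<And>s. s \<in> S \<Longrightarrow> s \<noteq> t \<Longrightarrow> dist s t < \<delta> \<Longrightarrow> norm (u s - u t) \<le> B * \<bar>s - t\<bar>"
    unfolding eventually_at by blast
  moreover have "norm (u s - u t) \<le> B * \<bar>s - t\<bar>" if "s = t" for s
    using that by simp
  ultimately show thesis
    using that[of \<delta> B] by (force simp: dist_real_def)
qed

lemma pointwise_lipschitz_imp_continuous:
  assumes "pointwise_lipschitz u S t"
  shows "continuous (at t within S) u"
proof -
  obtain B where B: "\<forall>\<^sub>F s in at t within S. norm (u s - u t) \<le> B * \<bar>s - t\<bar>"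
    using assms unfolding pointwise_lipschitz_def by blast
  have "((\<lambda>s. B * \<bar>s - t\<bar>) \<longlongrightarrow> B * \<bar>t - t\<bar>) (at t within S)"
    by (intro tendsto_intros)
  then have "((\<lambda>s. B * \<bar>s - t\<bar>) \<longlongrightarrow> 0) (at t within S)"
    by simp
  then have "((\<lambda>s. u s - u t) \<longlongrightarrow> 0) (at t within S)"
    using B by (rule Lim_null_comparison[rotated])
  then show ?thesis
    unfolding continuous_within by (simp add: LIM_zero_iff)
qed

lemma pointwise_lipschitz_const: "pointwise_lipschitz (\<lambda>s. c) S t"
  unfolding pointwise_lipschitz_def by (intro exI[of _ 0]) simp

lemma has_vector_derivative_imp_pointwise_lipschitz:
  assumes "(u has_vector_derivative D) (at t within S)"
  shows "pointwise_lipschitz u S t"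
proof -
  have "(u has_derivative (\<lambda>h. h *\<^sub>R D)) (at t within S)"
    using assms by (simp add: has_vector_derivative_def)
  then obtain d where "d > 0"
    and d: "\<And>s. s \<in> S \<Longrightarrow> norm (s - t) < d \<Longrightarrow> norm (u s - u t - (s - t) *\<^sub>R D) \<le> 1 * norm (s - t)"
    unfolding has_derivative_within_alt by (meson zero_less_one)
  have "\<forall>\<^sub>F s in at t within S. norm (u s - u t) \<le> (1 + norm D) * \<bar>s - t\<bar>"
    unfolding eventually_at
  proof (intro exI[of _ d] conjI ballI impI \<open>d > 0\<close>)
    fix s assume "s \<in> S" "s \<noteq> t \<and> dist s t < d"
    then have "norm (u s - u t - (s - t) *\<^sub>R D) \<le> \<bar>s - t\<bar>"
      using d by (auto simp: dist_real_def)
    moreover have "norm (u s - u t) \<le> norm ((s - t) *\<^sub>R D) + norm (u s - u t - (s - t) *\<^sub>R D)"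
      by (rule norm_triangle_sub)
    ultimately have "norm (u s - u t) \<le> \<bar>s - t\<bar> + \<bar>s - t\<bar> * norm D"
      by simp
    then show "norm (u s - u t) \<le> (1 + norm D) * \<bar>s - t\<bar>"
      by (simp add: algebra_simps)
  qed
  then show ?thesis unfolding pointwise_lipschitz_def by blast
qed

lemma lipschitz_on_imp_pointwise_lipschitz:
  assumes "L-lipschitz_on S u" "t \<in> S"
  shows "pointwise_lipschitz u S t"
  unfolding pointwise_lipschitz_def eventually_at
  using assms by (intro exI[of _ L] exI[of _ 1]) (auto simp: lipschitz_on_def dist_norm)

lemma pointwise_lipschitz_add:
  assumes "pointwise_lipschitz u S t" "pointwise_lipschitz v S t"
  shows "pointwise_lipschitz (\<lambda>s. u s + v s) S t"
proof -
  obtain A B where "\<forall>\<^sub>F s in at t within S. norm (u s - u t) \<le> A * \<bar>s - t\<bar>"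
    "\<forall>\<^sub>F s in at t within S. norm (v s - v t) \<le> B * \<bar>s - t\<bar>"
    using assms unfolding pointwise_lipschitz_def by blast
  then have "\<forall>\<^sub>F s in at t within S. norm ((u s + v s) - (u t + v t)) \<le> (A + B) * \<bar>s - t\<bar>"
  proof eventually_elim
    case (elim s)
    have "norm ((u s + v s) - (u t + v t)) \<le> norm (u s - u t) + norm (v s - v t)"
      by (metis add_diff_add norm_triangle_ineq)
    with elim show ?case by (simp add: distrib_right)
  qed
  then show ?thesis unfolding pointwise_lipschitz_def by blast
qed

lemma pointwise_lipschitz_minus:
  "pointwise_lipschitz u S t \<Longrightarrow> pointwise_lipschitz (\<lambda>s. - u s) S t"
  unfolding pointwise_lipschitz_def by (simp add: norm_minus_commute)

lemma pointwise_lipschitz_diff: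
  assumes "pointwise_lipschitz u S t" "pointwise_lipschitz v S t"
  shows "pointwise_lipschitz (\<lambda>s. u s - v s) S t"
  using pointwise_lipschitz_add[OF assms(1) pointwise_lipschitz_minus[OF assms(2)]] by simp

lemma (in bounded_bilinear) pointwise_lipschitz:
  assumes "pointwise_lipschitz u S t" "pointwise_lipschitz v S t"
  shows "pointwise_lipschitz (\<lambda>s. prod (u s) (v s)) S t"
proof -
  obtain A where "A \<ge> 0" and evA: "\<forall>\<^sub>F s in at t within S. norm (u s - u t) \<le> A * \<bar>s - t\<bar>"
    using assms(1) by (rule pointwise_lipschitzE)
  obtain B where "B \<ge> 0" and evB: "\<forall>\<^sub>F s in at t within S. norm (v s - v t) \<le> B * \<bar>s - t\<bar>"
    using assms(2) by (rule pointwise_lipschitzE)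
  have near: "\<forall>\<^sub>F s in at t within S. \<bar>s - t\<bar> < 1"
    unfolding eventually_at by (intro exI[of _ 1]) (auto simp: dist_real_def)
  obtain K where K: "K \<ge> 0" "\<And>a b. norm (prod a b) \<le> norm a * norm b * K"
    using nonneg_bounded by blast
  from evA evB near have "\<forall>\<^sub>F s in at t within S. norm (prod (u s) (v s) - prod (u t) (v t))
      \<le> K * (A * B + A * norm (v t) + norm (u t) * B) * \<bar>s - t\<bar>"
  proof eventually_elim
    case (elim s)
    define du dv where "du = u s - u t" and "dv = v s - v t"
    have "prod (u s) (v s) - prod (u t) (v t) = prod du dv + prod du (v t) + prod (u t) dv"
      by (simp add: du_def dv_def diff_left diff_right)
    then have "norm (prod (u s) (v s) - prod (u t) (v t))
        \<le> norm (prod du dv) + norm (prod du (v t)) + norm (prod (u t) dv)"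
      by (metis norm_triangle_le norm_triangle_ineq add_right_mono)
    also have "\<dots> \<le> norm du * norm dv * K + norm du * norm (v t) * K + norm (u t) * norm dv * K"
      by (intro add_mono K(2))
    also have "\<dots> = K * (norm du * norm dv + norm du * norm (v t) + norm (u t) * norm dv)"
      by (simp add: algebra_simps)
    also have "\<dots> \<le> K * ((A * \<bar>s - t\<bar>) * (B * \<bar>s - t\<bar>) + (A * \<bar>s - t\<bar>) * norm (v t) + norm (u t) * (B * \<bar>s - t\<bar>))"
      using elim \<open>K \<ge> 0\<close> \<open>A \<ge> 0\<close> unfolding du_def dv_def
      by (intro mult_left_mono add_mono mult_mono mult_right_mono mult_left_mono) auto
    also have "\<dots> \<le> K * (A * B + A * norm (v t) + norm (u t) * B) * \<bar>s - t\<bar>"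
    proof -
      have "(A * d) * (B * d) + (A * d) * norm (v t) + norm (u t) * (B * d)
          \<le> (A * B + A * norm (v t) + norm (u t) * B) * d" if "0 \<le> d" "d < 1" for d :: real
      proof -
        have "A * B * (d * d) \<le> A * B * d"
          using that \<open>A \<ge> 0\<close> \<open>B \<ge> 0\<close> by (intro mult_left_mono mult_left_le_one_le) auto
        then show ?thesis by (simp add: algebra_simps)
      qed
      from mult_left_mono[OF this[of "\<bar>s - t\<bar>"] \<open>K \<ge> 0\<close>] elim show ?thesis
        by (simp add: mult.assoc)
    qed
    finally show ?case .
  qed
  then show ?thesis unfolding pointwise_lipschitz_def by blast
qed

lemma Min_range_diff_le:
  fixes a b :: "'m::finite \<Rightarrow> real"
  shows "\<bar>Min (range a) - Min (range b)\<bar> \<le> (\<Sum>i\<in>UNIV. \<bar>a i - b i\<bar>)"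
proof -
  have le: "Min (range a) - Min (range b) \<le> (\<Sum>i\<in>UNIV. \<bar>a i - b i\<bar>)" for a b :: "'m \<Rightarrow> real"
  proof -
    have "Min (range b) \<in> range b" by (rule Min_in) auto
    then obtain j where j: "Min (range b) = b j" by blast
    have "Min (range a) \<le> a j" by simp
    moreover have "\<bar>a j - b j\<bar> \<le> (\<Sum>i\<in>UNIV. \<bar>a i - b i\<bar>)"
      by (rule member_le_sum) auto
    ultimately show ?thesis using j by linarith
  qed
  show ?thesis
    using le[of a b] le[of b a] by (simp add: abs_le_iff abs_minus_commute)
qed

lemma pointwise_lipschitz_Min:
  fixes h :: "'m::finite \<Rightarrow> real \<Rightarrow> real"
  assumes "\<And>i. pointwise_lipschitz (h i) S t"
  shows "pointwise_lipschitz (\<lambda>s. Min (range (\<lambda>i. h i s))) S t"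
proof -
  have "\<forall>i. \<exists>B. \<forall>\<^sub>F s in at t within S. norm (h i s - h i t) \<le> B * \<bar>s - t\<bar>"
    using assms unfolding pointwise_lipschitz_def by blast
  then obtain B where "\<And>i. \<forall>\<^sub>F s in at t within S. norm (h i s - h i t) \<le> B i * \<bar>s - t\<bar>"
    by metis
  then have "\<forall>\<^sub>F s in at t within S. \<forall>i. norm (h i s - h i t) \<le> B i * \<bar>s - t\<bar>"
    by (rule eventually_all_finite)
  then have "\<forall>\<^sub>F s in at t within S.
      norm (Min (range (\<lambda>i. h i s)) - Min (range (\<lambda>i. h i t))) \<le> (\<Sum>i\<in>UNIV. B i) * \<bar>s - t\<bar>"
  proof eventually_elim
    case (elim s)
    have "\<bar>Min (range (\<lambda>i. h i s)) - Min (range (\<lambda>i. h i t))\<bar> \<le> (\<Sum>i\<in>UNIV. \<bar>h i s - h i t\<bar>)"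
      by (rule Min_range_diff_le)
    also have "\<dots> \<le> (\<Sum>i\<in>UNIV. B i * \<bar>s - t\<bar>)"
      using elim by (intro sum_mono) auto
    finally show ?case by (simp add: sum_distrib_right)
  qed
  then show ?thesis unfolding pointwise_lipschitz_def by blast
qed

lemmas pointwise_lipschitz_intros =
  pointwise_lipschitz_const pointwise_lipschitz_add pointwise_lipschitz_diff pointwise_lipschitz_Min
  bounded_bilinear.pointwise_lipschitz[OF bounded_bilinear_mult]
  bounded_bilinear.pointwise_lipschitz[OF bounded_bilinear_inner]
  bounded_bilinear.pointwise_lipschitz[OF bounded_bilinear_scaleR]

section \<open>Monotonicity from almost-everywhere majorants\<close>

lemma nonincreasing_by_right_Dini:
  fixes H :: "real \<Rightarrow> real"
  assumes "a \<le> b" and "negligible E"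
    and lip: "\<And>t. t \<in> {a..b} \<Longrightarrow> pointwise_lipschitz H {a..b} t"
    and dini: "\<And>t \<epsilon> \<delta>. t \<in> {a<..<b} - E \<Longrightarrow> \<epsilon> > 0 \<Longrightarrow> \<delta> > 0 \<Longrightarrow>
      \<exists>h. 0 < h \<and> h < \<delta> \<and> H (t + h) - H t \<le> \<epsilon> * h"
  shows "H b \<le> H a"
proof (rule ccontr)
  \<comment> \<open>Tilt H to G with G a < G b. Being pointwise Lipschitz, G maps the exceptional points
    to a null set, so some level y between G a and G b is not attained there; the last point
    of [a,b] where G \<le> y is then a regular point at which the Dini condition fails.\<close>
  assume "\<not> H b \<le> H a"
  then have "H a < H b" by simp
  then have "a < b" using \<open>a \<le> b\<close> by (cases "a = b") auto
  define e where "e = (H b - H a) / (2 * (b - a))"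
  have "e > 0" using \<open>H a < H b\<close> \<open>a < b\<close> by (simp add: e_def)
  define G where "G s = H s - e * (s - a)" for s
  have "e * (b - a) = (H b - H a) / 2"
    using \<open>a < b\<close> by (simp add: e_def field_simps)
  then have "G a < G b"
    using \<open>H a < H b\<close> by (simp add: G_def)
  have lipG: "pointwise_lipschitz G {a..b} t" if "t \<in> {a..b}" for t
    unfolding G_def
    by (intro pointwise_lipschitz_diff lip[OF that] has_vector_derivative_imp_pointwise_lipschitz)
      (auto intro!: derivative_eq_intros)
  have contG: "continuous_on {a..b} G"
    unfolding continuous_on_eq_continuous_within
    using lipG pointwise_lipschitz_imp_continuous by blast
  define S where "S = {a..b} \<inter> E"
  have "negligible (G ` S)"
  proof (rule negligible_locally_Lipschitz_image)
    show "negligible S" using \<open>negligible E\<close> negligible_Int by (auto simp: S_def)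
    fix t assume "t \<in> S"
    then have "pointwise_lipschitz G {a..b} t" by (simp add: S_def lipG)
    then obtain B \<delta> where "\<delta> > 0"
      and B: "\<And>s. s \<in> {a..b} \<Longrightarrow> \<bar>s - t\<bar> < \<delta> \<Longrightarrow> norm (G s - G t) \<le> B * \<bar>s - t\<bar>"
      by (rule pointwise_lipschitz_ball) blast
    then show "\<exists>T B. open T \<and> t \<in> T \<and> (\<forall>s\<in>S \<inter> T. norm (G s - G t) \<le> B * norm (s - t))"
      by (intro exI[of _ "ball t \<delta>"] exI[of _ B]) (auto simp: S_def dist_real_def abs_minus_commute)
  qed simp
  moreover have "\<not> negligible {G a<..<G b}"
    using negligible_interval(2)[of "G a" "G b"] \<open>G a < G b\<close> by (simp add: box_real)
  ultimately have "\<not> {G a<..<G b} \<subseteq> G ` S"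
    using negligible_subset by blast
  then obtain y where y: "G a < y" "y < G b" "y \<notin> G ` S"
    by (auto simp: subset_iff)
  define A where "A = {a..b} \<inter> G -` {..y}"
  have "closed A" unfolding A_def by (rule continuous_closed_preimage[OF contG]) auto
  have "a \<in> A" using y \<open>a < b\<close> by (simp add: A_def)
  have "bdd_above A" unfolding A_def by (rule bdd_aboveI[of _ b]) auto
  define s0 where "s0 = Sup A"
  have "s0 \<in> A"
    unfolding s0_def using closed_contains_Sup[OF _ \<open>bdd_above A\<close> \<open>closed A\<close>] \<open>a \<in> A\<close> by blast
  have A_le: "\<And>s. s \<in> A \<Longrightarrow> s \<le> s0"
    unfolding s0_def using \<open>bdd_above A\<close> by (simp add: cSup_upper)
  have s0: "a \<le> s0" "s0 \<le> b" "G s0 \<le> y"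
    using \<open>s0 \<in> A\<close> by (auto simp: A_def)
  then have "s0 < b" using y by (cases "s0 = b") auto
  have "G s0 = y"
  proof (rule ccontr)
    assume "G s0 \<noteq> y"
    then have "G s0 < y" using s0 by simp
    moreover have "continuous (at s0 within {a..b}) G"
      using contG s0 by (simp add: continuous_on_eq_continuous_within)
    ultimately obtain d where "d > 0" and d: "\<forall>s\<in>{a..b}. dist s s0 < d \<longrightarrow> dist (G s) (G s0) < y - G s0"
      unfolding continuous_within_eps_delta by (meson diff_gt_0_iff_gt)
    define s where "s = min b (s0 + d / 2)"
    have "s \<in> {a..b}" "dist s s0 < d" "s > s0"
      using s0 \<open>s0 < b\<close> \<open>d > 0\<close> by (auto simp: s_def dist_real_def)
    with d have "\<bar>G s - G s0\<bar> < y - G s0" by (simp add: dist_real_def)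
    with \<open>s \<in> {a..b}\<close> have "s \<in> A" by (simp add: A_def)
    then show False using A_le \<open>s > s0\<close> by fastforce
  qed
  then have "s0 \<notin> E" "s0 \<noteq> a"
    using y s0 by (auto simp: S_def)
  then have "s0 \<in> {a<..<b} - E"
    using s0 \<open>s0 < b\<close> by simp
  from dini[OF this \<open>e > 0\<close>, of "b - s0"] \<open>s0 < b\<close>
  obtain h where h: "0 < h" "h < b - s0" "H (s0 + h) - H s0 \<le> e * h"
    by auto
  then have "G (s0 + h) \<le> G s0"
    by (simp add: G_def algebra_simps)
  then have "s0 + h \<in> A"
    using h s0 \<open>G s0 = y\<close> by (simp add: A_def)
  then show False using A_le h by fastforce
qed

lemma nonincreasing_by_differentiable_majorants:
  fixes H :: "real \<Rightarrow> real"
  assumes "a \<le> b" and "negligible E"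
    and lip: "\<And>t. t \<in> {a..b} \<Longrightarrow> pointwise_lipschitz H {a..b} t"
    and majorant: "\<And>t. t \<in> {a<..<b} - E \<Longrightarrow>
      \<exists>K D. K t = H t \<and> (\<forall>s. H s \<le> K s) \<and> (K has_real_derivative D) (at t) \<and> D \<le> 0"
  shows "H b \<le> H a"
proof (rule nonincreasing_by_right_Dini[OF assms(1-3)])
  fix t \<epsilon> \<delta> :: real
  assume "t \<in> {a<..<b} - E" "\<epsilon> > 0" "\<delta> > 0"
  then obtain K D where K: "K t = H t" "\<And>s. H s \<le> K s" "D \<le> 0"
    and "(K has_real_derivative D) (at t)"
    using majorant by blast
  moreover have "(\<lambda>h. h * D) = (*) D" by (auto simp: mult.commute)
  ultimately have "(K has_derivative (\<lambda>h. h * D)) (at t)"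
    by (simp add: has_field_derivative_def)
  then obtain d where "d > 0"
    and d: "\<And>s. norm (s - t) < d \<Longrightarrow> norm (K s - K t - (s - t) * D) \<le> \<epsilon> * norm (s - t)"
    unfolding has_derivative_at_alt using \<open>\<epsilon> > 0\<close> by blast
  define h where "h = min \<delta> d / 2"
  have h: "0 < h" "h < \<delta>" "h < d" using \<open>\<delta> > 0\<close> \<open>d > 0\<close> by (auto simp: h_def)
  have "K (t + h) - K t - h * D \<le> \<epsilon> * h" using d[of "t + h"] h by auto
  moreover have "h * D \<le> 0" using h \<open>D \<le> 0\<close> by (simp add: mult_nonneg_nonpos)
  ultimately have "H (t + h) - H t \<le> \<epsilon> * h" using K(1) K(2)[of "t + h"] by linarith
  with h show "\<exists>h. 0 < h \<and> h < \<delta> \<and> H (t + h) - H t \<le> \<epsilon> * h" by blast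
qed

lemma lipschitz_on_if_has_integral_bounded:
  fixes v v' :: "real \<Rightarrow> 'b::real_inner"
  assumes int: "\<And>t. t \<in> {a..b} \<Longrightarrow> (v' has_integral (v t - v a)) {a..t}"
    and "negligible N" and bound: "\<And>s. s \<in> {a..b} - N \<Longrightarrow> norm (v' s) \<le> M" and "0 \<le> M"
  shows "M-lipschitz_on {a..b} v"
proof -
  have le: "norm (v w - v u) \<le> M * (w - u)" if "a \<le> u" "u \<le> w" "w \<le> b" for u w
  proof -
    \<comment> \<open>Testing against d reduces everything to real-valued integrals, so no completeness is needed.\<close>
    define d where "d = v w - v u"
    define q where "q s = d \<bullet> v' s" for s
    have int_q: "(q has_integral (d \<bullet> (v t - v a))) {a..t}" if "t \<in> {a..b}" for t
      unfolding q_def using has_integral_linear[OF int[OF that] bounded_linear_inner_right[of d]]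
      by (simp add: o_def)
    have "q integrable_on {a..w}" using int_q[of w] that by (auto simp: integrable_on_def)
    then have "integral {a..u} q + integral {u..w} q = integral {a..w} q" "q integrable_on {u..w}"
      using that by (auto intro: Henstock_Kurzweil_Integration.integral_combine[OF \<open>a \<le> u\<close> \<open>u \<le> w\<close>] integrable_subinterval_real)
    moreover have "integral {a..u} q = d \<bullet> (v u - v a)" "integral {a..w} q = d \<bullet> (v w - v a)"
      using int_q[of u] int_q[of w] that by (auto intro: integral_unique)
    ultimately have "(q has_integral (d \<bullet> d)) {u..w}"
      by (metis add_diff_cancel_left' d_def has_integral_integral inner_diff_right diff_diff_cancel
          diff_diff_eq2)
    then have spiked: "((\<lambda>s. if s \<in> N then 0 else q s) has_integral (d \<bullet> d)) {u..w}"
      by (rule has_integral_spike[OF \<open>negligible N\<close>, rotated]) simp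
    have "norm (if s \<in> N then 0 else q s) \<le> norm d * M" if "s \<in> {u..w}" for s
    proof -
      have "norm (q s) \<le> norm d * norm (v' s)" by (simp add: q_def Cauchy_Schwarz_ineq2)
      also have "\<dots> \<le> norm d * M" if "s \<notin> N"
        using bound[of s] that \<open>s \<in> {u..w}\<close> \<open>a \<le> u\<close> \<open>w \<le> b\<close> by (intro mult_left_mono) auto
      finally show ?thesis using \<open>0 \<le> M\<close> by auto
    qed
    from has_integral_bound_real[OF _ finite.emptyI spiked this] \<open>0 \<le> M\<close> \<open>u \<le> w\<close>
    have "norm (d \<bullet> d) \<le> norm d * M * (w - u)" by simp
    then have "norm d * norm d \<le> norm d * (M * (w - u))"
      by (simp add: power2_norm_eq_inner[symmetric] power2_eq_square mult.assoc)
    then show ?thesis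
      using \<open>0 \<le> M\<close> \<open>u \<le> w\<close> by (cases "norm d = 0") (auto simp: d_def)
  qed
  show ?thesis
  proof (rule lipschitz_onI[OF _ \<open>0 \<le> M\<close>])
    fix u w assume "u \<in> {a..b}" "w \<in> {a..b}"
    then show "dist (v u) (v w) \<le> M * dist u w"
      using le[of u w] le[of w u]
      by (cases "u \<le> w") (auto simp: dist_norm norm_minus_commute abs_real_def)
  qed
qed

lemma has_real_derivative_norm_power2:
  fixes u :: "real \<Rightarrow> 'a::real_inner"
  assumes "(u has_vector_derivative u') (at t)"
  shows "((\<lambda>s. (norm (u s))\<^sup>2) has_real_derivative 2 * (u t \<bullet> u')) (at t)"
proof -
  have "((\<lambda>s. u s \<bullet> u s) has_vector_derivative (u t \<bullet> u' + u' \<bullet> u t)) (at t)"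
    by (rule bounded_bilinear.has_vector_derivative[OF bounded_bilinear_inner assms assms])
  then show ?thesis
    by (simp add: power2_norm_eq_inner has_real_derivative_iff_has_vector_derivative inner_commute)
qed

section \<open>The convex hull of the gradients\<close>

lemma compact_Cset: "compact (Cset (g :: 'm::finite \<Rightarrow> 'a \<Rightarrow> 'a::real_normed_vector) y)"
  unfolding Cset_def by (rule finite_imp_compact_convex_hull) simp

lemma convex_Cset: "convex (Cset g y)"
  unfolding Cset_def by simp

lemma gradient_in_Cset: "g i y \<in> Cset g y"
  unfolding Cset_def by (rule hull_inc) simp

lemma Cset_halfspace_ge:
  fixes g :: "'m \<Rightarrow> 'a \<Rightarrow> 'a::real_inner"
  assumes "c \<in> Cset g y" "\<And>i. r \<le> d \<bullet> g i y"
  shows "r \<le> d \<bullet> c"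
proof -
  have "Cset g y \<subseteq> {c. d \<bullet> c \<ge> r}"
    unfolding Cset_def by (rule hull_minimal) (use assms(2) convex_halfspace_ge in auto)
  with assms(1) show ?thesis by auto
qed

lemma norm_Cset_le:
  fixes g :: "'m::finite \<Rightarrow> 'a \<Rightarrow> 'a::real_normed_vector"
  assumes "c \<in> Cset g y"
  shows "norm c \<le> (\<Sum>i\<in>UNIV. norm (g i y))"
proof -
  have "Cset g y \<subseteq> cball 0 (\<Sum>i\<in>UNIV. norm (g i y))"
    unfolding Cset_def by (rule hull_minimal) (auto intro!: member_le_sum)
  with assms show ?thesis by auto
qed

lemma proj_equation_decompose:
  fixes g :: "'m::finite \<Rightarrow> 'a \<Rightarrow> 'a::real_inner"
  assumes eq: "\<beta> *\<^sub>R v + proj {c + w | c. c \<in> Cset g y} 0 = 0" and "\<beta> > 0"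
  shows "\<exists>c\<in>Cset g y. w = - \<beta> *\<^sub>R v - c \<and> (\<forall>i. v \<bullet> g i y \<le> v \<bullet> c)"
proof -
  define K where "K = {c + w | c. c \<in> Cset g y}"
  have K: "K = (+) w ` Cset g y" unfolding K_def by (auto simp: add.commute)
  have K_compact: "compact K" unfolding K
    by (intro compact_continuous_image compact_Cset continuous_intros)
  have K_convex: "convex K" unfolding K by (intro convex_translation convex_Cset)
  have K_nonempty: "K \<noteq> {}" unfolding K using gradient_in_Cset[of g undefined y] by blast
  note P = proj_variational_inequality[OF K_compact K_convex K_nonempty]
  have p: "proj K 0 = - \<beta> *\<^sub>R v" using eq unfolding K_def by (simp add: eq_neg_iff_add_eq_0 add.commute)
  obtain c where c: "c \<in> Cset g y" "proj K 0 = c + w" using P(1) unfolding K_def by blast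
  have w: "w = - \<beta> *\<^sub>R v - c" using c p by (simp add: algebra_simps)
  have "v \<bullet> g i y \<le> v \<bullet> c" for i
  proof -
    have "g i y + w \<in> K" unfolding K_def using gradient_in_Cset[of g i y] by blast
    from P(2)[OF this] have "0 \<le> \<beta> * (v \<bullet> c - v \<bullet> g i y)"
      unfolding p w by (simp add: algebra_simps inner_diff_right)
    with \<open>\<beta> > 0\<close> show ?thesis by (simp add: zero_le_mult_iff)
  qed
  with c w show ?thesis by blast
qed

section \<open>The merit function and the constant R\<close>

definition min_gap :: "('m::finite \<Rightarrow> 'a \<Rightarrow> real) \<Rightarrow> 'a \<Rightarrow> 'a \<Rightarrow> real" where
  "min_gap f y z = Min (range (\<lambda>i. f i y - f i z))"

lemma u0_eq_SUP_min_gap: "u0 f y = (SUP z. ereal (min_gap f y z))"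
  unfolding u0_def min_gap_def ..

lemma min_gap_le: "min_gap f y z \<le> f i y - f i z"
  unfolding min_gap_def by (rule Min_le) auto

lemma min_gap_attained: "\<exists>j. min_gap f y z = f j y - f j z"
proof -
  have "min_gap f y z \<in> range (\<lambda>i. f i y - f i z)"
    unfolding min_gap_def by (rule Min_in) auto
  then show ?thesis by blast
qed

lemma min_gap_self [simp]: "min_gap f y y = 0"
  unfolding min_gap_def by simp

lemma min_gap_mono:
  assumes "\<And>i. f i w \<le> f i z"
  shows "min_gap f y z \<le> min_gap f y w"
  using min_gap_attained[of f y w] min_gap_le[of f y z] assms by (metis diff_left_mono order_trans)

lemma min_gap_le_u0: "ereal (min_gap f y z) \<le> u0 f y"
  unfolding u0_eq_SUP_min_gap by (rule SUP_upper) simp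

lemma u0_nonneg: "0 \<le> u0 f y"
  using min_gap_le_u0[of f y y] by (simp add: zero_ereal_def)

lemma u0_le_iff_min_gap_le: "u0 f y \<le> ereal C \<longleftrightarrow> (\<forall>z. min_gap f y z \<le> C)"
  unfolding u0_eq_SUP_min_gap by (simp add: SUP_le_iff)

lemma u0_bounds_from_min_gap:
  assumes "\<And>z. c * min_gap f y z \<le> C" "c > 0"
  shows "u0 f y \<le> ereal (C / c)" "ereal c * u0 f y \<le> ereal C"
proof -
  show le: "u0 f y \<le> ereal (C / c)"
    unfolding u0_le_iff_min_gap_le using assms by (simp add: pos_le_divide_eq mult.commute)
  have "ereal c * u0 f y \<le> ereal c * ereal (C / c)"
    using le \<open>c > 0\<close> by (intro ereal_mult_left_mono) auto
  then show "ereal c * u0 f y \<le> ereal C" using \<open>c > 0\<close> by simp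
qed

lemma Rconst_nonneg:
  assumes "weak_pareto_level f (Fv f x0) \<noteq> {}"
  shows "0 \<le> Rconst f x0"
proof -
  obtain w where "w \<in> weak_pareto_level f (Fv f x0)" using assms by blast
  moreover have "0 \<le> (INF v \<in> Fv f -` {Fv f w}. (norm (v - x0))\<^sup>2 / 2)"
    by (rule cINF_greatest) auto
  ultimately show ?thesis
    unfolding Rconst_def by (intro SUP_upper2[of "Fv f w"]) auto
qed

lemma weak_pareto_level_near_start:
  fixes f :: "'m \<Rightarrow> 'a::real_normed_vector \<Rightarrow> real"
  assumes "weak_pareto_level f (Fv f y) \<noteq> {}" and "\<And>i. f i y \<le> f i x0"
    and "Rconst f x0 = ereal r" and "\<delta> > 0"
  obtains w where "\<And>i. f i w \<le> f i y" and "(norm (w - x0))\<^sup>2 / 2 < r + \<delta>"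
proof -
  obtain xs where xs: "xs \<in> weak_pareto_level f (Fv f y)" using assms(1) by blast
  then have "xs \<in> weak_pareto_level f (Fv f x0)"
    using assms(2) by (auto simp: weak_pareto_level_def level_def Fv_def intro: order_trans)
  then have "ereal (INF v \<in> Fv f -` {Fv f xs}. (norm (v - x0))\<^sup>2 / 2) \<le> Rconst f x0"
    unfolding Rconst_def by (intro SUP_upper) auto
  then have "(INF v \<in> Fv f -` {Fv f xs}. (norm (v - x0))\<^sup>2 / 2) < r + \<delta>"
    using assms(3,4) by simp
  moreover have "bdd_below ((\<lambda>v. (norm (v - x0))\<^sup>2 / 2) ` (Fv f -` {Fv f xs}))"
    by (rule bdd_belowI2[of _ 0]) simp
  ultimately obtain w where "Fv f w = Fv f xs" "(norm (w - x0))\<^sup>2 / 2 < r + \<delta>"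
    by (subst (asm) cINF_less_iff) auto
  moreover have "f i w \<le> f i y" for i
    using xs fun_cong[OF \<open>Fv f w = Fv f xs\<close>, of i] by (simp add: weak_pareto_level_def level_def Fv_def)
  ultimately show thesis using that by blast
qed

text \<open>The supremum defining u0 may be restricted to points near x0: any z can be traded for
  a point w that dominates it and has nearly minimal distance to x0 among weakly Pareto points.\<close>
lemma min_gap_le_via_weak_pareto:
  fixes f :: "'m::finite \<Rightarrow> 'a::real_normed_vector \<Rightarrow> real"
  assumes pareto: "\<And>y. weak_pareto_level f (Fv f y) \<noteq> {}"
    and R: "Rconst f x0 = ereal r" and u: "u0 f x0 = ereal u"
    and level: "\<And>i. f i y \<le> f i x0"
    and est: "\<And>w. c * min_gap f y w \<le> c0 * min_gap f x0 w + b * (norm (x0 - w))\<^sup>2 + d"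
    and "0 \<le> c" "0 \<le> c0" "0 \<le> b"
  shows "c * min_gap f y z \<le> c0 * u + 2 * b * r + d"
proof (rule field_le_epsilon)
  fix e :: real assume "e > 0"
  obtain z' where z': "\<And>i. f i z' \<le> f i x0" "min_gap f y z \<le> min_gap f y z'"
  proof (cases "min_gap f y z \<le> 0")
    case True
    then show thesis using that[of y] level by simp
  next
    case False
    have "f i z \<le> f i x0" for i
      using False min_gap_le[of f y z i] level[of i] by linarith
    then show thesis using that[of z] by simp
  qed
  define \<delta> where "\<delta> = e / (2 * b + 1)"
  have "\<delta> > 0" "2 * b * \<delta> \<le> e"
    using \<open>e > 0\<close> \<open>0 \<le> b\<close> by (auto simp: \<delta>_def field_simps)
  obtain w where w: "\<And>i. f i w \<le> f i z'" "(norm (w - x0))\<^sup>2 / 2 < r + \<delta>"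
    using weak_pareto_level_near_start[OF pareto z'(1) R \<open>\<delta> > 0\<close>] by blast
  have "c * min_gap f y z \<le> c * min_gap f y w"
    using z'(2) min_gap_mono[of f w z' y] w(1) \<open>0 \<le> c\<close> by (intro mult_left_mono) auto
  also have "\<dots> \<le> c0 * min_gap f x0 w + b * (norm (x0 - w))\<^sup>2 + d"
    by (rule est)
  also have "\<dots> \<le> c0 * u + b * (2 * (r + \<delta>)) + d"
  proof -
    have "min_gap f x0 w \<le> u" using min_gap_le_u0[of f x0 w] u by simp
    moreover have "(norm (x0 - w))\<^sup>2 \<le> 2 * (r + \<delta>)" using w(2) by (simp add: norm_minus_commute)
    ultimately show ?thesis
      using \<open>0 \<le> c0\<close> \<open>0 \<le> b\<close> by (intro add_mono mult_left_mono) auto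
  qed
  finally show "c * min_gap f y z \<le> c0 * u + 2 * b * r + d + e"
    using \<open>2 * b * \<delta> \<le> e\<close> by (simp add: algebra_simps)
qed

section \<open>The trajectory\<close>

locale inertial_trajectory =
  fixes f :: "'m::finite \<Rightarrow> 'a::real_inner \<Rightarrow> real"
    and g :: "'m \<Rightarrow> 'a \<Rightarrow> 'a"
    and x x' x'' :: "real \<Rightarrow> 'a"
    and \<alpha> t0 :: real
    and E :: "real set"
  assumes convex: "\<And>i. convex_on UNIV (f i)"
    and gradient: "\<And>i y. (f i has_derivative (\<lambda>h. g i y \<bullet> h)) (at y)"
    and gradient_continuous: "\<And>i. continuous_on UNIV (g i)"
    and alpha_pos: "\<alpha> > 0" and t0_pos: "t0 > 0"
    and position_derivative: "\<And>t. t \<ge> t0 \<Longrightarrow> (x has_vector_derivative x' t) (at t within {t0..})"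
    and velocity_continuous: "continuous_on {t0..} x'"
    and velocity_integral: "\<And>t. t \<ge> t0 \<Longrightarrow> (x'' has_integral (x' t - x' t0)) {t0..t}"
    and velocity_start: "x' t0 = 0"
    and negligible_E: "negligible E"
    and velocity_derivative: "\<And>t. t > t0 \<Longrightarrow> t \<notin> E \<Longrightarrow> (x' has_vector_derivative x'' t) (at t)"
    and equation: "\<And>t. t > t0 \<Longrightarrow> t \<notin> E \<Longrightarrow>
      (\<alpha> / t) *\<^sub>R x' t + proj {c + x'' t | c. c \<in> Cset g (x t)} 0 = 0"
begin

lemma position_has_derivative_at:
  assumes "t > t0"
  shows "(x has_vector_derivative x' t) (at t)"
proof -
  have "t \<in> interior {t0..}" using assms by simp
  then show ?thesis
    using position_derivative[of t] at_within_interior[of t "{t0..}"] assms by simp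
qed

lemma position_has_derivative_within:
  assumes "t \<in> {t0..T}"
  shows "(x has_vector_derivative x' t) (at t within {t0..T})"
  using position_derivative[of t] assms by (auto intro: has_vector_derivative_within_subset)

lemma continuous_on_position: "continuous_on {t0..} x"
  by (rule continuous_on_vector_derivative) (use position_derivative in auto)

lemma acceleration_decompose:
  assumes "t > t0" "t \<notin> E"
  shows "\<exists>c\<in>Cset g (x t). x'' t = - (\<alpha> / t) *\<^sub>R x' t - c \<and> (\<forall>i. x' t \<bullet> g i (x t) \<le> x' t \<bullet> c)"
  using assms t0_pos alpha_pos by (intro proj_equation_decompose equation) auto

lemma acceleration_bounded:
  assumes "T \<ge> t0"
  obtains M where "M \<ge> 0" "\<And>s. s \<in> {t0..T} - (E \<union> {t0}) \<Longrightarrow> norm (x'' s) \<le> M"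
proof -
  have "bounded (x' ` {t0..T})"
    by (intro compact_imp_bounded compact_continuous_image continuous_on_subset[OF velocity_continuous]) auto
  then obtain B1 where "B1 > 0" and B1: "\<And>s. s \<in> {t0..T} \<Longrightarrow> norm (x' s) \<le> B1"
    unfolding bounded_pos by auto
  have "continuous_on {t0..T} (\<lambda>s. \<Sum>i\<in>UNIV. norm (g i (x s)))"
    by (intro continuous_intros continuous_on_compose2[OF gradient_continuous]
        continuous_on_subset[OF continuous_on_position]) auto
  then have "bounded ((\<lambda>s. \<Sum>i\<in>UNIV. norm (g i (x s))) ` {t0..T})"
    by (intro compact_imp_bounded compact_continuous_image) auto
  then obtain B2 where "B2 > 0" and B2: "\<And>s. s \<in> {t0..T} \<Longrightarrow> norm (\<Sum>i\<in>UNIV. norm (g i (x s))) \<le> B2"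
    unfolding bounded_pos by auto
  have "norm (x'' s) \<le> \<alpha> / t0 * B1 + B2" if s: "s \<in> {t0..T} - (E \<union> {t0})" for s
  proof -
    have "s > t0" "s \<notin> E" using s by auto
    then obtain c where c: "c \<in> Cset g (x s)" "x'' s = - (\<alpha> / s) *\<^sub>R x' s - c"
      using acceleration_decompose by blast
    have "norm (x'' s) \<le> norm ((\<alpha> / s) *\<^sub>R x' s) + norm c"
      unfolding c(2) by (metis norm_minus_cancel norm_triangle_ineq4 scaleR_minus_left)
    also have "norm ((\<alpha> / s) *\<^sub>R x' s) = (\<alpha> / s) * norm (x' s)"
      using \<open>s > t0\<close> t0_pos alpha_pos by simp
    also have "(\<alpha> / s) * norm (x' s) \<le> (\<alpha> / t0) * B1"
      using \<open>s > t0\<close> t0_pos alpha_pos B1[of s] s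
      by (intro mult_mono divide_left_mono) auto
    also have "norm c \<le> B2"
      using norm_Cset_le[OF c(1)] B2[of s] s by auto
    finally show ?thesis by simp
  qed
  moreover have "\<alpha> / t0 * B1 + B2 \<ge> 0"
    using \<open>B1 > 0\<close> \<open>B2 > 0\<close> t0_pos alpha_pos by simp
  ultimately show thesis using that by blast
qed

lemma velocity_lipschitz:
  assumes "T \<ge> t0"
  obtains M where "M-lipschitz_on {t0..T} x'"
proof -
  obtain M where "M \<ge> 0" "\<And>s. s \<in> {t0..T} - (E \<union> {t0}) \<Longrightarrow> norm (x'' s) \<le> M"
    using acceleration_bounded[OF assms] by blast
  moreover have "negligible (E \<union> {t0})" using negligible_E by simp
  ultimately have "M-lipschitz_on {t0..T} x'"
    using velocity_integral by (intro lipschitz_on_if_has_integral_bounded[where N = "E \<union> {t0}"]) auto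
  then show thesis by (rule that)
qed

lemma objective_has_derivative:
  assumes "(x has_vector_derivative x' t) (at t within S)"
  shows "((\<lambda>s. f i (x s)) has_vector_derivative g i (x t) \<bullet> x' t) (at t within S)"
proof -
  have "(x has_derivative (\<lambda>h. h *\<^sub>R x' t)) (at t within S)"
    using assms by (simp add: has_vector_derivative_def)
  from has_derivative_compose[OF this gradient]
  show ?thesis by (simp add: has_vector_derivative_def o_def)
qed

lemma pointwise_lipschitz_position: "t \<in> {t0..T} \<Longrightarrow> pointwise_lipschitz x {t0..T} t"
  by (rule has_vector_derivative_imp_pointwise_lipschitz[OF position_has_derivative_within])

lemma pointwise_lipschitz_velocity:
  assumes "t \<in> {t0..T}"
  shows "pointwise_lipschitz x' {t0..T} t"
proof -
  obtain M where "M-lipschitz_on {t0..T} x'"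
    using velocity_lipschitz[of T] assms by auto
  then show ?thesis using assms by (rule lipschitz_on_imp_pointwise_lipschitz)
qed

lemma pointwise_lipschitz_objective:
  "t \<in> {t0..T} \<Longrightarrow> pointwise_lipschitz (\<lambda>s. f i (x s)) {t0..T} t"
  by (rule has_vector_derivative_imp_pointwise_lipschitz[OF
        objective_has_derivative[OF position_has_derivative_within]])

lemma objective_nonincreasing:
  assumes "t0 \<le> T"
  shows "f i (x T) \<le> f i (x t0)"
proof -
  define H where "H s = f i (x s) + (norm (x' s))\<^sup>2 / 2" for s
  have "H T \<le> H t0"
  proof (rule nonincreasing_by_differentiable_majorants[OF assms negligible_E])
    fix t assume "t \<in> {t0..T}"
    then show "pointwise_lipschitz H {t0..T} t"
      unfolding H_def power2_norm_eq_inner divide_inverse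
      by (intro pointwise_lipschitz_intros pointwise_lipschitz_objective pointwise_lipschitz_velocity)
  next
    fix t assume "t \<in> {t0<..<T} - E"
    then have "t > t0" "t \<notin> E" by auto
    then obtain c where c: "x'' t = - (\<alpha> / t) *\<^sub>R x' t - c" "\<And>j. x' t \<bullet> g j (x t) \<le> x' t \<bullet> c"
      using acceleration_decompose by blast
    have "(H has_real_derivative g i (x t) \<bullet> x' t + x' t \<bullet> x'' t) (at t)"
      unfolding H_def has_real_derivative_iff_has_vector_derivative
      using objective_has_derivative[OF position_has_derivative_at]
        has_real_derivative_norm_power2[OF velocity_derivative] \<open>t > t0\<close> \<open>t \<notin> E\<close>
      by (auto intro!: derivative_eq_intros simp: has_real_derivative_iff_has_vector_derivative)
    moreover have "g i (x t) \<bullet> x' t + x' t \<bullet> x'' t \<le> 0"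
    proof -
      have "x' t \<bullet> x'' t = - ((\<alpha> / t) * (x' t \<bullet> x' t)) - x' t \<bullet> c"
        using c(1) by (simp add: inner_diff_right)
      moreover have "(\<alpha> / t) * (x' t \<bullet> x' t) \<ge> 0" using \<open>t > t0\<close> t0_pos alpha_pos by simp
      ultimately show ?thesis using c(2)[of i] by (simp add: inner_commute)
    qed
    ultimately show "\<exists>K D. K t = H t \<and> (\<forall>s. H s \<le> K s) \<and> (K has_real_derivative D) (at t) \<and> D \<le> 0"
      by blast
  qed
  moreover have "f i (x T) \<le> H T" by (simp add: H_def)
  moreover have "H t0 = f i (x t0)" by (simp add: H_def velocity_start)
  ultimately show ?thesis by linarith
qed

definition dissipation :: "real \<Rightarrow> real" where
  "dissipation s = integral {t0..s} (\<lambda>\<tau>. \<tau> * (norm (x' \<tau>))\<^sup>2)"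

lemma dissipation_has_derivative_within:
  assumes "t \<in> {t0..T}"
  shows "(dissipation has_vector_derivative t * (norm (x' t))\<^sup>2) (at t within {t0..T})"
  unfolding dissipation_def using assms
  by (intro integral_has_vector_derivative continuous_intros
      continuous_on_subset[OF velocity_continuous]) auto

lemma dissipation_has_derivative_at:
  assumes "t > t0"
  shows "(dissipation has_real_derivative t * (norm (x' t))\<^sup>2) (at t)"
proof -
  have "t \<in> interior {t0..t + 1}" using assms by simp
  with dissipation_has_derivative_within[of t "t + 1"] assms show ?thesis
    unfolding at_within_interior[OF \<open>t \<in> interior {t0..t + 1}\<close>]
    by (simp add: has_real_derivative_iff_has_vector_derivative)
qed

lemma dissipation_nonneg: "t0 \<le> t \<Longrightarrow> 0 \<le> dissipation t"
  unfolding dissipation_def using t0_pos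
  by (intro integral_nonneg integrable_continuous_real continuous_intros
      continuous_on_subset[OF velocity_continuous]) auto

text \<open>The Lyapunov function of the paper, with h(s) standing for the objective gap at x(s)
  (either min_gap or the gap of a single objective).\<close>
definition lyapunov :: "(real \<Rightarrow> real) \<Rightarrow> 'a \<Rightarrow> real \<Rightarrow> real" where
  "lyapunov h z s = s\<^sup>2 * h s + (norm (2 *\<^sub>R (x s - z) + s *\<^sub>R x' s))\<^sup>2 / 2
     + (\<alpha> - 3) * (norm (x s - z))\<^sup>2 - (3 - \<alpha>) * dissipation s"

lemma lyapunov_mono:
  assumes "\<And>s. h1 s \<le> h2 s"
  shows "lyapunov h1 z s \<le> lyapunov h2 z s"
proof -
  have "s\<^sup>2 * h1 s \<le> s\<^sup>2 * h2 s" by (intro mult_left_mono assms) simp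
  then show ?thesis unfolding lyapunov_def by linarith
qed

lemma pointwise_lipschitz_lyapunov:
  assumes "\<And>t. t \<in> {t0..T} \<Longrightarrow> pointwise_lipschitz h {t0..T} t" and "t \<in> {t0..T}"
  shows "pointwise_lipschitz (lyapunov h z) {t0..T} t"
  unfolding lyapunov_def power2_norm_eq_inner unfolding power2_eq_square divide_inverse
  using assms
  by (intro pointwise_lipschitz_intros pointwise_lipschitz_position pointwise_lipschitz_velocity
      has_vector_derivative_imp_pointwise_lipschitz[OF dissipation_has_derivative_within]
      has_vector_derivative_imp_pointwise_lipschitz[OF has_vector_derivative_id])

lemma lyapunov_has_derivative:
  assumes "t > t0" "t \<notin> E" and acc: "x'' t = - (\<alpha> / t) *\<^sub>R x' t - c"
    and dh: "(h has_real_derivative h') (at t)"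
  shows "(lyapunov h z has_real_derivative t\<^sup>2 * (h' - x' t \<bullet> c) + 2 * t * (h t - (x t - z) \<bullet> c)) (at t)"
proof -
  define y where "y = x t - z"
  define w' where "w' = (3 - \<alpha>) *\<^sub>R x' t - t *\<^sub>R c"
  have dx: "(x has_vector_derivative x' t) (at t)" and dx': "(x' has_vector_derivative x'' t) (at t)"
    using \<open>t > t0\<close> \<open>t \<notin> E\<close> by (auto intro: position_has_derivative_at velocity_derivative)
  have "((\<lambda>s. 2 *\<^sub>R (x s - z) + s *\<^sub>R x' s) has_vector_derivative 2 *\<^sub>R x' t + (t *\<^sub>R x'' t + x' t)) (at t)"
    by (auto intro!: derivative_eq_intros dx dx')
  moreover have "2 *\<^sub>R x' t + (t *\<^sub>R x'' t + x' t) = w'"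
    using \<open>t > t0\<close> t0_pos scaleR_add_left[of 2 1 "x' t"]
    by (simp add: acc w'_def algebra_simps scaleR_diff_right)
  ultimately have dw: "((\<lambda>s. 2 *\<^sub>R (x s - z) + s *\<^sub>R x' s) has_vector_derivative w') (at t)"
    by simp
  have dy: "((\<lambda>s. x s - z) has_vector_derivative x' t) (at t)"
    by (auto intro!: derivative_eq_intros dx)
  have dsq: "((\<lambda>s. s\<^sup>2) has_real_derivative 2 * t) (at t)"
    by (auto intro!: derivative_eq_intros)
  have deriv: "(lyapunov h z has_real_derivative
      2 * t * h t + h' * t\<^sup>2 + 2 * ((2 *\<^sub>R y + t *\<^sub>R x' t) \<bullet> w') / 2
      + (\<alpha> - 3) * (2 * (y \<bullet> x' t)) - (3 - \<alpha>) * (t * (norm (x' t))\<^sup>2)) (at t)"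
    unfolding lyapunov_def[abs_def] y_def
    by (intro DERIV_diff DERIV_add DERIV_mult dsq dh DERIV_cdivide DERIV_cmult
        has_real_derivative_norm_power2[OF dw] has_real_derivative_norm_power2[OF dy]
        dissipation_has_derivative_at \<open>t > t0\<close>)
  have "(2 *\<^sub>R y + t *\<^sub>R x' t) \<bullet> w' = 2 * (3 - \<alpha>) * (y \<bullet> x' t) - 2 * t * (y \<bullet> c)
      + t * (3 - \<alpha>) * (x' t \<bullet> x' t) - t * t * (x' t \<bullet> c)"
    by (simp add: w'_def inner_add_left inner_diff_right algebra_simps)
  then have P_eq: "(2 *\<^sub>R y + t *\<^sub>R x' t) \<bullet> w' = 2 * (3 - \<alpha>) * (y \<bullet> x' t) - 2 * t * (y \<bullet> c)
      + t * (3 - \<alpha>) * (norm (x' t))\<^sup>2 - t\<^sup>2 * (x' t \<bullet> c)"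
    by (simp add: dot_square_norm power2_eq_square)
  have alg: "2 * t * H + H' * t\<^sup>2 + 2 * P / 2 + (\<alpha> - 3) * (2 * Q) - (3 - \<alpha>) * (t * N)
      = t\<^sup>2 * (H' - V) + 2 * t * (H - Y)"
    if "P = 2 * (3 - \<alpha>) * Q - 2 * t * Y + t * (3 - \<alpha>) * N - t\<^sup>2 * V" for H H' P Q N V Y :: real
    using that by (simp add: algebra_simps)
  from deriv[unfolded alg[OF P_eq]] show ?thesis by (simp add: y_def)
qed

lemma lyapunov_nonincreasing:
  fixes z :: 'a
  assumes "t0 \<le> T"
  defines "H \<equiv> lyapunov (\<lambda>s. min_gap f (x s) z) z"
  shows "H T \<le> H t0"
proof (rule nonincreasing_by_differentiable_majorants[OF assms(1) negligible_E])
  fix t assume "t \<in> {t0..T}"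
  then show "pointwise_lipschitz H {t0..T} t"
    unfolding H_def min_gap_def
    by (intro pointwise_lipschitz_lyapunov pointwise_lipschitz_intros pointwise_lipschitz_objective)
next
  fix t assume "t \<in> {t0<..<T} - E"
  then have "t > t0" "t \<notin> E" by auto
  then obtain c where c: "c \<in> Cset g (x t)" "x'' t = - (\<alpha> / t) *\<^sub>R x' t - c"
      "\<And>i. x' t \<bullet> g i (x t) \<le> x' t \<bullet> c"
    using acceleration_decompose by blast
  \<comment> \<open>The minimum is not differentiable, but near t it is majorised by the objective
    attaining it at t.\<close>
  obtain j where j: "min_gap f (x t) z = f j (x t) - f j z"
    using min_gap_attained[of f "x t" z] by blast
  define K where "K = lyapunov (\<lambda>s. f j (x s) - f j z) z"
  have "K t = H t" by (simp add: K_def H_def lyapunov_def j)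
  moreover have "H s \<le> K s" for s
    unfolding H_def K_def by (intro lyapunov_mono min_gap_le)
  moreover have "(K has_real_derivative t\<^sup>2 * (g j (x t) \<bullet> x' t - x' t \<bullet> c)
      + 2 * t * (min_gap f (x t) z - (x t - z) \<bullet> c)) (at t)"
    using objective_has_derivative[OF position_has_derivative_at[OF \<open>t > t0\<close>]]
    unfolding K_def j
    by (intro lyapunov_has_derivative \<open>t > t0\<close> \<open>t \<notin> E\<close> c(2))
      (auto intro!: derivative_eq_intros simp: has_real_derivative_iff_has_vector_derivative)
  moreover have "t\<^sup>2 * (g j (x t) \<bullet> x' t - x' t \<bullet> c) + 2 * t * (min_gap f (x t) z - (x t - z) \<bullet> c) \<le> 0"
  proof -
    have "g j (x t) \<bullet> x' t - x' t \<bullet> c \<le> 0" using c(3)[of j] by (simp add: inner_commute)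
    moreover have "min_gap f (x t) z \<le> (x t - z) \<bullet> c"
    proof (rule Cset_halfspace_ge[OF c(1)])
      fix i
      have "min_gap f (x t) z \<le> f i (x t) - f i z" by (rule min_gap_le)
      also have "\<dots> \<le> g i (x t) \<bullet> (x t - z)"
        using convex_on_gradient_inequality[OF convex gradient, of i "x t" z]
        by (simp add: inner_diff_right)
      finally show "min_gap f (x t) z \<le> (x t - z) \<bullet> g i (x t)" by (simp add: inner_commute)
    qed
    ultimately show ?thesis
      using \<open>t > t0\<close> t0_pos by (simp add: mult_nonneg_nonpos add_nonpos_nonpos)
  qed
  ultimately show "\<exists>K D. K t = H t \<and> (\<forall>s. H s \<le> K s) \<and> (K has_real_derivative D) (at t) \<and> D \<le> 0"
    by blast
qed

lemma lyapunov_estimate: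
  assumes "3 \<le> \<alpha>" "t0 \<le> T"
  shows "T\<^sup>2 * min_gap f (x T) z
    \<le> t0\<^sup>2 * min_gap f (x t0) z + (\<alpha> - 1) * (norm (x t0 - z))\<^sup>2 + (3 - \<alpha>) * dissipation T"
proof -
  define H where "H = lyapunov (\<lambda>s. min_gap f (x s) z) z"
  have "0 \<le> (\<alpha> - 3) * (norm (x T - z))\<^sup>2" using assms by simp
  then have "T\<^sup>2 * min_gap f (x T) z - (3 - \<alpha>) * dissipation T \<le> H T"
    unfolding H_def lyapunov_def by simp
  also have "\<dots> \<le> H t0"
    using lyapunov_nonincreasing[OF assms(2)] by (simp add: H_def)
  also have "\<dots> = t0\<^sup>2 * min_gap f (x t0) z + (2 * norm (x t0 - z))\<^sup>2 / 2
      + (\<alpha> - 3) * (norm (x t0 - z))\<^sup>2"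
    by (simp add: H_def lyapunov_def velocity_start dissipation_def)
  also have "\<dots> = t0\<^sup>2 * min_gap f (x t0) z + (\<alpha> - 1) * (norm (x t0 - z))\<^sup>2"
    by (simp add: power_mult_distrib algebra_simps)
  finally show ?thesis by linarith
qed

lemma u0_convergence_rate:
  assumes "3 \<le> \<alpha>" "t0 \<le> T" and pareto_nonempty: "\<And>y. weak_pareto_level f (Fv f y) \<noteq> {}"
    and R: "Rconst f (x t0) = ereal r"
  shows "ereal (T\<^sup>2) * u0 f (x T) \<le> ereal (t0\<^sup>2) * u0 f (x t0) + ereal (2 * (\<alpha> - 1)) * Rconst f (x t0)
      + ereal ((3 - \<alpha>) * dissipation T)" (is ?weighted)
    and "u0 f (x T) \<le> (ereal (t0\<^sup>2) * u0 f (x t0) + ereal (2 * (\<alpha> - 1)) * Rconst f (x t0)) / ereal (T\<^sup>2)"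
      (is ?rate)
proof -
  have "T\<^sup>2 > 0" "(3 - \<alpha>) * dissipation T \<le> 0"
    using assms(1,2) t0_pos dissipation_nonneg[of T] by (auto simp: mult_nonpos_nonneg)
  have "0 \<le> r" using Rconst_nonneg[OF pareto_nonempty[of "x t0"]] R by simp
  consider u where "u0 f (x t0) = ereal u" | "u0 f (x t0) = \<infinity>"
    using u0_nonneg[of f "x t0"] by (cases "u0 f (x t0)") auto
  then have "?weighted \<and> ?rate"
  proof cases
    case (1 u)
    define C0 where "C0 = t0\<^sup>2 * u + 2 * (\<alpha> - 1) * r"
    have "T\<^sup>2 * min_gap f (x T) z \<le> C0 + (3 - \<alpha>) * dissipation T" for z
      using objective_nonincreasing[OF \<open>t0 \<le> T\<close>] lyapunov_estimate[OF assms(1,2)] assms(1)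
      unfolding C0_def by (intro min_gap_le_via_weak_pareto[OF pareto_nonempty R 1]) auto
    note bounds = u0_bounds_from_min_gap[OF this \<open>T\<^sup>2 > 0\<close>]
    have "(C0 + (3 - \<alpha>) * dissipation T) / T\<^sup>2 \<le> C0 / T\<^sup>2"
      using \<open>T\<^sup>2 > 0\<close> \<open>(3 - \<alpha>) * dissipation T \<le> 0\<close> by (intro divide_right_mono) auto
    with bounds(1) have "u0 f (x T) \<le> ereal (C0 / T\<^sup>2)"
      by (meson ereal_less_eq(3) order_trans)
    with bounds(2) show ?thesis
      using 1 R \<open>T\<^sup>2 > 0\<close> by (simp add: C0_def)
  qed (use R t0_pos \<open>0 \<le> r\<close> \<open>T\<^sup>2 > 0\<close> in simp)
  then show ?weighted ?rate by blast+
qed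

end

theorem theorem4p14:
  fixes f :: "'m::finite \<Rightarrow> 'a::{real_inner,complete_space} \<Rightarrow> real"
    and g :: "'m \<Rightarrow> 'a \<Rightarrow> 'a"
    and x x' x'' :: "real \<Rightarrow> 'a"
    and \<alpha> t0 :: real and x0 :: 'a
  assumes conv: "\<And>i. convex_on UNIV (f i)"
    and grad: "\<And>i y. (f i has_derivative (\<lambda>h. g i y \<bullet> h)) (at y)"
    and grad_cont: "\<And>i. continuous_on UNIV (g i)"
    and alpha: "\<alpha> \<ge> 3" and t0: "t0 > 0"
    and x_C1: "\<And>t. t \<ge> t0 \<Longrightarrow> (x has_vector_derivative x' t) (at t within {t0..})"
    and x'_cont: "continuous_on {t0..} x'"
    and x'_ac: "\<And>T. T \<ge> t0 \<Longrightarrow> abs_cont_on t0 T x'"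
    and x''_meas: "bochner_measurable_on x'' {t0..}"
    and x''_int: "\<And>t. t \<ge> t0 \<Longrightarrow> (x'' has_integral (x' t - x' t0)) {t0..t}"
    and x''_deriv: "\<exists>N. negligible N \<and>
          (\<forall>t \<in> {t0..} - N. (x' has_vector_derivative x'' t) (at t within {t0..}))"
    and eqn: "\<exists>N. negligible N \<and> (\<forall>t \<in> {t0<..} - N.
          (\<alpha> / t) *\<^sub>R x' t + proj {c + x'' t | c. c \<in> Cset g (x t)} 0 = 0)"
    and init: "x t0 = x0" "x' t0 = 0"
    and pareto: "\<And>y0 y. y \<in> level f (Fv f y0) \<Longrightarrow>
          \<exists>xs. xs \<in> weak_pareto_level f (Fv f y)"
    and R_fin: "Rconst f x0 < \<infinity>"
  shows "\<forall>t \<ge> t0.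
      ereal (t\<^sup>2) * u0 f (x t) \<le> ereal (t0\<^sup>2) * u0 f x0 + ereal (2 * (\<alpha> - 1)) * Rconst f x0
        + ereal ((3 - \<alpha>) * integral {t0..t} (\<lambda>s. s * (norm (x' s))\<^sup>2))
    \<and> u0 f (x t) \<le> (ereal (t0\<^sup>2) * u0 f x0 + ereal (2 * (\<alpha> - 1)) * Rconst f x0) / ereal (t\<^sup>2)"
proof -
  obtain N1 N2 where "negligible N1" "negligible N2"
    and N1: "\<And>t. t \<in> {t0..} - N1 \<Longrightarrow> (x' has_vector_derivative x'' t) (at t within {t0..})"
    and N2: "\<And>t. t \<in> {t0<..} - N2 \<Longrightarrow> (\<alpha> / t) *\<^sub>R x' t + proj {c + x'' t | c. c \<in> Cset g (x t)} 0 = 0"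
    using x''_deriv eqn by blast
  have "(x' has_vector_derivative x'' t) (at t)" if "t > t0" "t \<notin> N1" for t
    using N1[of t] that at_within_interior[of t "{t0..}"] by simp
  then interpret inertial_trajectory f g x x' x'' \<alpha> t0 "N1 \<union> N2"
    using conv grad grad_cont alpha t0 x_C1 x'_cont x''_int init \<open>negligible N1\<close> \<open>negligible N2\<close> N2
    by unfold_locales auto
  have pareto_nonempty: "weak_pareto_level f (Fv f y) \<noteq> {}" for y
    using pareto[of y y] by (auto simp: level_def Fv_def)
  obtain r where "Rconst f (x t0) = ereal r"
    using Rconst_nonneg[OF pareto_nonempty[of x0]] R_fin init by (cases "Rconst f x0") auto
  from u0_convergence_rate[OF alpha _ pareto_nonempty this] show ?thesis
    by (simp add: init dissipation_def)
qed
end
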